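(* Let $\mathcal{F}=(V_m,\eta_m)_{m=1}^4$ be a tetrahedron of flags in $\mathbb{RP}^3$. The following are equivalent: (1) $\mathcal{F}$ is an inscribed tetrahedron of flags (of hyperbolic, Anti-de Sitter or half-pipe type); (2) $t^{\mathcal{F}}_\sigma=1$ for all edge-faces $\sigma$; (3) $e^{\mathcal{F}}_\sigma=e^{\mathcal{F}}_{\mathrm{op}\,\sigma}$ for all edge-faces $\sigma$. Moreover, in this case, for any edge-face $\sigma$, $\mathcal{F}$ is of hyperbolic type if $j_\sigma>0$, of Anti-de Sitter type if $j_\sigma<0$, and of half-pipe type if $j_\sigma=0$, where $j_\sigma=e_\sigma-X_\sigma^2$.
   Context: Flags: $(V,\eta)$, $\eta$ a plane of $\mathbb{RP}^3$ through $V$. A tetrahedron of flags is a non-degenerate ($\eta_i(V_j)=0\iff i=j$) ordered quadruple $(V_m,\eta_m)_{m=1}^4$ with $V_m$ not coplanar such that some projective tetrahedron with vertices $V_m$ has interior disjoint from all $\eta_m$. Edge-faces $\sigma=(ij)k$ are even permutations $[ijkl]$ of $\{1,2,3,4\}$; $\sigma_+=(ki)j$, $\sigma_-=(jk)i$, $\mathrm{op}\,\sigma=(lk)j$. Triple ratio $t_\sigma=\frac{\bar\eta_i(\bar V_j)\bar\eta_j(\bar V_k)\bar\eta_k(\bar V_i)}{\bar\eta_i(\bar V_k)\bar\eta_j(\bar V_i)\bar\eta_k(\bar V_j)}$, edge ratio $e_\sigma=\frac{\bar\eta_i(\bar V_k)\bar\eta_j(\bar V_l)}{\bar\eta_i(\bar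 V_l)\bar\eta_j(\bar V_k)}$; $\mu_\sigma=e_{\sigma_-}e_{\sigma_+}-e_{\sigma_-}+1$, $X_\sigma=\mu_\sigma t_\sigma e_\sigma/(t_\sigma+1)$. Let $B$ be a symmetric bilinear form on $\mathbb{R}^4$ which is either nondegenerate of signature $(3,1)$ (hyperbolic type), nondegenerate of signature $(2,2)$ (Anti-de Sitter type), or degenerate with one-dimensional radical and of signature $(2,1)$ on the quotient by the radical (half-pipe type); let $\mathbb{X}_B=\{[v]:B(v,v)<0\}$. $\mathcal{F}$ is inscribed in $\mathbb{X}_B$ if there is a projective tetrahedron with vertices $V_1,\dots,V_4$ with interior contained in $\mathbb{X}_B$, each $V_m=[v_m]$ satisfies $B(v_m,v_m)=0$ and $v_m$ not in the radical, and $\eta_m=[B(v_m,\cdot)]$ is the tangent plane to the quadric at $V_m$. $\mathcal{F}$ is an inscribed tetrahedron of flags of the corresponding type if it is inscribed in $\mathbb{X}_B$ for some such $B$. *)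

theory Defs
  imports "HOL-Analysis.Analysis" "HOL-Combinatorics.Permutations"
begin

text \<open>Points of RP^3 are represented by nonzero lifts in real^4, planes by
nonzero covectors in real^4 (acting by the inner product). The tetrahedron of flags is
given by lifts v m, eta m for m in {1,2,3,4}; all quantities below are invariant under
rescaling of the lifts.\<close>

definition idx :: "nat set" where "idx = {1,2,3,4}"

definition ev :: "real^4 \<Rightarrow> real^4 \<Rightarrow> real" where
  "ev \<eta> x = \<eta> \<bullet> x"

text \<open>Interior of the projective tetrahedron with vertices [v m], determined by a choice of
signs s m of the lifts: (lifts of) points sum_m lambda_m s_m v_m with all lambda_m > 0.\<close>
definition tet_interior :: "(nat \<Rightarrow> real^4) \<Rightarrow> (nat \<Rightarrow> real) \<Rightarrow> (real^4) set" where
  "tet_interior v s = {w. \<exists>lam::nat \<Rightarrow> real. (\<forall>m\<in>idx. lam m > 0) \<and>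
                          w = (\<Sum>m\<in>idx. (lam m * s m) *\<^sub>R v m)}"

definition sign_choice :: "(nat \<Rightarrow> real) \<Rightarrow> bool" where
  "sign_choice s \<longleftrightarrow> (\<forall>m\<in>idx. s m = 1 \<or> s m = -1)"

definition coplanar :: "(nat \<Rightarrow> real^4) \<Rightarrow> bool" where
  "coplanar v \<longleftrightarrow> (\<exists>\<eta>::real^4. \<eta> \<noteq> 0 \<and> (\<forall>m\<in>idx. ev \<eta> (v m) = 0))"

definition tetrahedron_of_flags :: "(nat \<Rightarrow> real^4) \<Rightarrow> (nat \<Rightarrow> real^4) \<Rightarrow> bool" where
  "tetrahedron_of_flags v eta \<longleftrightarrow>
     (\<forall>m\<in>idx. v m \<noteq> 0 \<and> eta m \<noteq> 0 \<and> ev (eta m) (v m) = 0) \<and>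
     (\<forall>i\<in>idx. \<forall>j\<in>idx. ev (eta i) (v j) = 0 \<longleftrightarrow> i = j) \<and>
     \<not> coplanar v \<and>
     (\<exists>s. sign_choice s \<and> (\<forall>w\<in>tet_interior v s. \<forall>m\<in>idx. ev (eta m) w \<noteq> 0))"

text \<open>Edge-faces: quadruples (i,j,k,l) such that 1,2,3,4 to i,j,k,l is an even permutation;
the edge-face (ij)k corresponds to (i,j,k,l).\<close>
definition edge_face :: "nat \<times> nat \<times> nat \<times> nat \<Rightarrow> bool" where
  "edge_face \<sigma> \<longleftrightarrow> (case \<sigma> of (i,j,k,l) \<Rightarrow>
     (\<exists>p. p permutes idx \<and> evenperm p \<and> p 1 = i \<and> p 2 = j \<and> p 3 = k \<and> p 4 = l))"

definition ef_plus :: "nat \<times> nat \<times> nat \<times> nat \<Rightarrow> nat \<times> nat \<times> nat \<times> nat" where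
  "ef_plus \<sigma> = (case \<sigma> of (i,j,k,l) \<Rightarrow> (k,i,j,l))"

definition ef_minus :: "nat \<times> nat \<times> nat \<times> nat \<Rightarrow> nat \<times> nat \<times> nat \<times> nat" where
  "ef_minus \<sigma> = (case \<sigma> of (i,j,k,l) \<Rightarrow> (j,k,i,l))"

definition ef_op :: "nat \<times> nat \<times> nat \<times> nat \<Rightarrow> nat \<times> nat \<times> nat \<times> nat" where
  "ef_op \<sigma> = (case \<sigma> of (i,j,k,l) \<Rightarrow> (l,k,j,i))"

definition triple_ratio :: "(nat \<Rightarrow> real^4) \<Rightarrow> (nat \<Rightarrow> real^4) \<Rightarrow> nat \<times> nat \<times> nat \<times> nat \<Rightarrow> real" where
  "triple_ratio v eta \<sigma> = (case \<sigma> of (i,j,k,l) \<Rightarrow>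
     (ev (eta i) (v j) * ev (eta j) (v k) * ev (eta k) (v i)) /
     (ev (eta i) (v k) * ev (eta j) (v i) * ev (eta k) (v j)))"

definition edge_ratio :: "(nat \<Rightarrow> real^4) \<Rightarrow> (nat \<Rightarrow> real^4) \<Rightarrow> nat \<times> nat \<times> nat \<times> nat \<Rightarrow> real" where
  "edge_ratio v eta \<sigma> = (case \<sigma> of (i,j,k,l) \<Rightarrow>
     (ev (eta i) (v k) * ev (eta j) (v l)) / (ev (eta i) (v l) * ev (eta j) (v k)))"

definition mu_inv :: "(nat \<Rightarrow> real^4) \<Rightarrow> (nat \<Rightarrow> real^4) \<Rightarrow> nat \<times> nat \<times> nat \<times> nat \<Rightarrow> real" where
  "mu_inv v eta \<sigma> = edge_ratio v eta (ef_minus \<sigma>) * edge_ratio v eta (ef_plus \<sigma>)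
                      - edge_ratio v eta (ef_minus \<sigma>) + 1"

definition X_inv :: "(nat \<Rightarrow> real^4) \<Rightarrow> (nat \<Rightarrow> real^4) \<Rightarrow> nat \<times> nat \<times> nat \<times> nat \<Rightarrow> real" where
  "X_inv v eta \<sigma> = mu_inv v eta \<sigma> * triple_ratio v eta \<sigma> * edge_ratio v eta \<sigma>
                     / (triple_ratio v eta \<sigma> + 1)"

definition j_inv :: "(nat \<Rightarrow> real^4) \<Rightarrow> (nat \<Rightarrow> real^4) \<Rightarrow> nat \<times> nat \<times> nat \<times> nat \<Rightarrow> real" where
  "j_inv v eta \<sigma> = edge_ratio v eta \<sigma> - (X_inv v eta \<sigma>)\<^sup>2"

definition bform :: "real^4^4 \<Rightarrow> real^4 \<Rightarrow> real^4 \<Rightarrow> real" where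
  "bform M x y = x \<bullet> (M *v y)"

definition diag_mat :: "real^4 \<Rightarrow> real^4^4" where
  "diag_mat d = (\<chi> i j. if i = j then d $ i else 0)"

text \<open>Signature via Sylvester normal form: M is congruent to the given diagonal matrix.\<close>
definition congruent_to :: "real^4^4 \<Rightarrow> real^4^4 \<Rightarrow> bool" where
  "congruent_to M D \<longleftrightarrow> (\<exists>P::real^4^4. invertible P \<and> transpose P ** M ** P = D)"

definition hyperbolic_form :: "real^4^4 \<Rightarrow> bool" where
  "hyperbolic_form M \<longleftrightarrow> transpose M = M \<and> congruent_to M (diag_mat (vector [1, 1, 1, -1]))"

definition ads_form :: "real^4^4 \<Rightarrow> bool" where
  "ads_form M \<longleftrightarrow> transpose M = M \<and> congruent_to M (diag_mat (vector [1, 1, -1, -1]))"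

definition halfpipe_form :: "real^4^4 \<Rightarrow> bool" where
  "halfpipe_form M \<longleftrightarrow> transpose M = M \<and> congruent_to M (diag_mat (vector [1, 1, -1, 0]))"

definition in_radical :: "real^4^4 \<Rightarrow> real^4 \<Rightarrow> bool" where
  "in_radical M x \<longleftrightarrow> (\<forall>y. bform M x y = 0)"

definition inscribed_in :: "(nat \<Rightarrow> real^4) \<Rightarrow> (nat \<Rightarrow> real^4) \<Rightarrow> real^4^4 \<Rightarrow> bool" where
  "inscribed_in v eta M \<longleftrightarrow>
     (\<exists>s. sign_choice s \<and> (\<forall>w\<in>tet_interior v s. bform M w w < 0)) \<and>
     (\<forall>m\<in>idx. bform M (v m) (v m) = 0 \<and> \<not> in_radical M (v m) \<and>
        (\<exists>c::real. c \<noteq> 0 \<and> (\<forall>y. bform M (v m) y = c * ev (eta m) y)))"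

definition inscribed_hyperbolic where
  "inscribed_hyperbolic v eta \<longleftrightarrow> (\<exists>M. hyperbolic_form M \<and> inscribed_in v eta M)"
definition inscribed_ads where
  "inscribed_ads v eta \<longleftrightarrow> (\<exists>M. ads_form M \<and> inscribed_in v eta M)"
definition inscribed_halfpipe where
  "inscribed_halfpipe v eta \<longleftrightarrow> (\<exists>M. halfpipe_form M \<and> inscribed_in v eta M)"

definition inscribed_tetrahedron_of_flags where
  "inscribed_tetrahedron_of_flags v eta \<longleftrightarrow>
     inscribed_hyperbolic v eta \<or> inscribed_ads v eta \<or> inscribed_halfpipe v eta"

end

theory Submission
  imports Defs
begin

text \<open>
  Write a_ij = eta_i(v_j) for the pairing matrix of the flags; it vanishes exactly on the diagonal,
  and its triple ratios are cyclic ratios of its entries. The three triple ratios at vertex 1 equal 1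
  exactly when the covectors can be rescaled, c_i a_ij = g_ij, to a symmetric matrix g, and then all
  triple ratios equal 1. The identity e_(op sigma) = e_sigma t_(ijk) t_(ilj), together with the
  positivity of triple ratios forced by the disjointness condition, makes equality of opposite edge
  ratios equivalent to this.

  An inscribed tetrahedron yields such a rescaling, g being the Gram matrix of the vertices. Conversely
  g, read as a Gram matrix in the basis v_1, ..., v_4, defines a symmetric form whose tangent planes at
  the v_i are the eta_i; the sign pattern of the a_ij makes the form negative on the interior.
  Diagonalising a symmetric matrix with zero diagonal explicitly shows that, when g_12 g_13 g_23 < 0,
  its signature is (3,1), (2,2), or (2,1) with a one-dimensional radical, according as
  heron (g_12 g_34) (g_13 g_24) (g_14 g_23) is negative, positive or zero; and
  j_sigma = - heron (g_ij g_kl) (g_ik g_jl) (g_il g_jk) / (4 (g_il g_jk)^2), where the value of heron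
  does not depend on the edge-face.
\<close>

section \<open>Bilinear forms and congruence\<close>

lemma vector_4:
  "(vector [x, y, z, w] :: 'a::zero^4) $ 1 = x"
  "(vector [x, y, z, w] :: 'a::zero^4) $ 2 = y"
  "(vector [x, y, z, w] :: 'a::zero^4) $ 3 = z"
  "(vector [x, y, z, w] :: 'a::zero^4) $ 4 = w"
  unfolding vector_def by simp_all

lemma matrix_vector_mult_4:
  "(G :: real^4^4) *v vector [a, b, c, d] = vector
    [G$1$1 * a + G$1$2 * b + G$1$3 * c + G$1$4 * d, G$2$1 * a + G$2$2 * b + G$2$3 * c + G$2$4 * d,
     G$3$1 * a + G$3$2 * b + G$3$3 * c + G$3$4 * d, G$4$1 * a + G$4$2 * b + G$4$3 * c + G$4$4 * d]"
  by (simp add: vec_eq_iff forall_4 matrix_vector_mult_def sum_4 vector_4)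

lemma inner_vector_4:
  "vector [a, b, c, d] \<bullet> (vector [x, y, z, w] :: real^4) = a * x + b * y + c * z + d * w"
  by (simp add: inner_vec_def sum_4 vector_4)

lemma prod_UNIV_4: "(\<Prod>a\<in>(UNIV :: 4 set). f a) = f 1 * f 2 * f 3 * (f 4 :: 'a::comm_monoid_mult)"
  unfolding UNIV_4 by (simp add: ac_simps)

lemma bform_scaleR_left: "bform M (c *\<^sub>R x) z = c * bform M x z"
  by (simp add: bform_def)

lemma bform_scaleR_right: "bform M z (c *\<^sub>R x) = c * bform M z x"
  by (simp add: bform_def matrix_vector_mult_scaleR)

lemma bform_sum_left: "bform M (\<Sum>i\<in>S. x i) z = (\<Sum>i\<in>S. bform M (x i) z)"
  by (simp add: bform_def inner_sum_left)

lemma bform_commute: "transpose M = M \<Longrightarrow> bform M x y = bform M y x"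
  unfolding bform_def by (metis dot_lmul_matrix inner_commute transpose_matrix_vector)

lemma matrix_columns_mult:
  fixes X :: "'n::finite \<Rightarrow> real^'m"
  shows "(\<chi> r a. X a $ r) *v y = (\<Sum>a\<in>UNIV. y $ a *\<^sub>R X a)"
  by (simp add: vec_eq_iff matrix_vector_mult_def sum_component mult.commute)

lemma congruence_matrix_columns:
  fixes X :: "4 \<Rightarrow> real^4"
  shows "(transpose (\<chi> r a. X a $ r) ** M ** (\<chi> r a. X a $ r)) $ a $ b = bform M (X a) (X b)"
  by (simp add: bform_def matrix_matrix_mult_def transpose_def inner_vec_def matrix_vector_mult_def
      sum_distrib_left sum_distrib_right mult.assoc mult.left_commute) (rule sum.swap)

lemma det_diag_mat: "det (diag_mat d) = d $ 1 * d $ 2 * d $ 3 * d $ 4"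
proof -
  have "det (diag_mat d) = (\<Prod>a\<in>UNIV. diag_mat d $ a $ a)"
    by (rule det_diagonal) (simp add: diag_mat_def)
  then show ?thesis
    by (simp add: prod_UNIV_4 diag_mat_def)
qed

lemma congruent_to_sgn_det: "congruent_to M D \<Longrightarrow> sgn (det M) = sgn (det D)"
proof -
  assume "congruent_to M D"
  then obtain P where P: "invertible P" "transpose P ** M ** P = D"
    unfolding congruent_to_def by blast
  have "det D = (det P)\<^sup>2 * det M"
    using P(2) by (auto simp: det_mul det_transpose power2_eq_square)
  moreover have "sgn ((det P)\<^sup>2) = 1"
    using P(1) invertible_det_nz by (intro sgn_pos) auto
  ultimately show ?thesis
    by (metis sgn_mult mult_1)
qed

lemma congruent_to_of_congruent:
  assumes "invertible V" "congruent_to (transpose V ** M ** V) D"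
  shows "congruent_to M D"
proof -
  obtain P where P: "invertible P" "transpose P ** (transpose V ** M ** V) ** P = D"
    using assms(2) unfolding congruent_to_def by blast
  have "transpose (V ** P) ** M ** (V ** P) = D"
    using P(2) by (simp add: matrix_transpose_mul matrix_mul_assoc)
  with invertible_mult[OF assms(1) P(1)] show ?thesis
    unfolding congruent_to_def by blast
qed

lemma congruent_to_orthogonal_basis:
  fixes X :: "4 \<Rightarrow> real^4"
  assumes indep: "\<And>y. (\<Sum>a\<in>UNIV. y $ a *\<^sub>R X a) = 0 \<Longrightarrow> y = 0"
    and orth: "\<And>a b. a \<noteq> b \<Longrightarrow> bform M (X a) (X b) = 0"
  shows "congruent_to M (diag_mat (\<chi> a. sgn (bform M (X a) (X a))))"
proof -
  define q where "q a = bform M (X a) (X a)" for a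
  define r where "r a = (if q a = 0 then 1 else 1 / sqrt \<bar>q a\<bar>)" for a
  define P where "P = (\<chi> i a. (r a *\<^sub>R X a) $ i)"
  have r: "r a \<noteq> 0" for a
    by (simp add: r_def)
  have "invertible P"
    unfolding invertible_left_inverse matrix_left_invertible_ker
  proof (intro allI impI)
    fix y assume "P *v y = 0"
    then have "(\<Sum>a\<in>UNIV. (\<chi> a. y $ a * r a) $ a *\<^sub>R X a) = 0"
      unfolding P_def matrix_columns_mult by (simp add: mult.commute)
    then have "(\<chi> a. y $ a * r a) = 0"
      by (rule indep)
    then show "y = 0"
      using r by (simp add: vec_eq_iff)
  qed
  have "r a * (r a * q a) = sgn (q a)" for a
    by (cases "q a = 0") (simp_all add: r_def real_sgn_eq)
  then have "(transpose P ** M ** P) $ a $ b = (if a = b then sgn (q a) else 0)" for a b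
    unfolding P_def congruence_matrix_columns
    by (simp add: bform_scaleR_left bform_scaleR_right orth q_def)
  then have "transpose P ** M ** P = diag_mat (\<chi> a. sgn (q a))"
    by (simp add: vec_eq_iff diag_mat_def)
  with \<open>invertible P\<close> show ?thesis
    unfolding congruent_to_def q_def by blast
qed

lemma independent_family_permute:
  fixes X :: "'n::finite \<Rightarrow> 'v::real_vector"
  assumes indep: "\<And>y. (\<Sum>a\<in>UNIV. y $ a *\<^sub>R X a) = 0 \<Longrightarrow> y = 0"
    and p: "p permutes UNIV"
    and zero: "(\<Sum>a\<in>UNIV. y $ a *\<^sub>R X (p a)) = 0"
  shows "y = 0"
proof -
  define z where "z = (\<chi> b. y $ inv p b)"
  have "(\<Sum>b\<in>UNIV. z $ b *\<^sub>R X b) = (\<Sum>a\<in>UNIV. z $ p a *\<^sub>R X (p a))"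
    using sum.permute[OF p] by (simp add: comp_def)
  also have "\<dots> = 0"
    using zero permutes_inverses(2)[OF p] by (simp add: z_def)
  finally have "z = 0"
    by (rule indep)
  moreover have "y $ a = z $ p a" for a
    using permutes_inverses(2)[OF p] by (simp add: z_def)
  ultimately show "y = 0"
    by (simp add: vec_eq_iff)
qed

section \<open>Symmetric matrices with zero diagonal\<close>

text \<open>heron (g_12 g_34) (g_13 g_24) (g_14 g_23) is the determinant of the symmetric 4 x 4 matrix
  with zero diagonal and off-diagonal entries g_ij.\<close>
definition heron :: "real \<Rightarrow> real \<Rightarrow> real \<Rightarrow> real" where
  "heron x y z = x * x + y * y + z * z - 2 * x * y - 2 * y * z - 2 * z * x"

locale zero_diagonal =
  fixes G :: "real^4^4"
  assumes symmetric: "transpose G = G"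
    and diagonal: "\<And>a. G $ a $ a = 0"
    and nonzero: "G$1$2 \<noteq> 0" "G$1$3 \<noteq> 0" "G$2$3 \<noteq> 0"
begin

definition triple :: real where
  "triple = G$1$2 * G$1$3 * G$2$3"

definition cross :: real where
  "cross = G$1$2 * (G$1$2 * G$3$4 - G$1$3 * G$2$4 - G$1$4 * G$2$3)"

text \<open>A G-orthogonal basis: basis 2 and basis 3 diagonalise the span of e_1, e_2; basis 1 spans the
  G-orthogonal complement of that plane inside the span of e_1, e_2, e_3; basis 4 is G-orthogonal to
  e_1, e_2 and e_3.\<close>
definition basis :: "4 \<Rightarrow> real^4" where
  "basis a =
    (if a = 1 then vector [- G$2$3, - G$1$3, G$1$2, 0]
     else if a = 2 then vector [1, G$1$2, 0, 0]
     else if a = 3 then vector [1, - G$1$2, 0, 0]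
     else vector [cross * G$2$3 + 2 * triple * G$2$4, cross * G$1$3 + 2 * triple * G$1$4,
       - cross * G$1$2, - 2 * triple * G$1$2])"

lemma basis_simps:
  "basis 1 = vector [- G$2$3, - G$1$3, G$1$2, 0]"
  "basis 2 = vector [1, G$1$2, 0, 0]"
  "basis 3 = vector [1, - G$1$2, 0, 0]"
  "basis 4 = vector [cross * G$2$3 + 2 * triple * G$2$4, cross * G$1$3 + 2 * triple * G$1$4,
     - cross * G$1$2, - 2 * triple * G$1$2]"
  by (simp_all add: basis_def)

lemma entries:
  "G$2$1 = G$1$2" "G$3$1 = G$1$3" "G$4$1 = G$1$4" "G$3$2 = G$2$3" "G$4$2 = G$2$4" "G$4$3 = G$3$4"
  "G$1$1 = 0" "G$2$2 = 0" "G$3$3 = 0" "G$4$4 = 0"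
proof -
  have "G $ b $ a = G $ a $ b" for a b
    using arg_cong[OF symmetric, of "\<lambda>A. A $ a $ b"] by (simp add: transpose_def)
  then show "G$2$1 = G$1$2" "G$3$1 = G$1$3" "G$4$1 = G$1$4" "G$3$2 = G$2$3" "G$4$2 = G$2$4"
    "G$4$3 = G$3$4"
    by simp_all
  show "G$1$1 = 0" "G$2$2 = 0" "G$3$3 = 0" "G$4$4 = 0"
    using diagonal by simp_all
qed

lemma mult_basis_4:
  "G *v basis 4 = vector [0, 0, 0, - G$1$2 * heron (G$1$2 * G$3$4) (G$1$3 * G$2$4) (G$1$4 * G$2$3)]"
  unfolding basis_simps matrix_vector_mult_4
  by (simp add: entries triple_def cross_def heron_def algebra_simps)

lemma bform_basis_4:
  "bform G x (basis 4) = - x$4 * G$1$2 * heron (G$1$2 * G$3$4) (G$1$3 * G$2$4) (G$1$4 * G$2$3)"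
  by (simp add: bform_def mult_basis_4 inner_vec_def sum_4 vector_4)

lemma bform_basis_self:
  "bform G (basis 1) (basis 1) = - 2 * triple"
  "bform G (basis 2) (basis 2) = 2 * (G$1$2)\<^sup>2"
  "bform G (basis 3) (basis 3) = - 2 * (G$1$2)\<^sup>2"
  "bform G (basis 4) (basis 4) =
    2 * (G$1$2)\<^sup>2 * triple * heron (G$1$2 * G$3$4) (G$1$3 * G$2$4) (G$1$4 * G$2$3)"
  unfolding bform_basis_4
  by (simp_all add: basis_simps triple_def bform_def matrix_vector_mult_4 inner_vector_4 vector_4
      entries algebra_simps power2_eq_square)

lemma basis_orthogonal: "a \<noteq> b \<Longrightarrow> bform G (basis a) (basis b) = 0"
proof -
  have "bform G (basis 1) (basis 2) = 0" "bform G (basis 1) (basis 3) = 0"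
    "bform G (basis 2) (basis 3) = 0" "bform G (basis a) (basis 4) = 0" if "a \<noteq> 4" for a
    unfolding bform_basis_4 using that exhaust_4[of a]
    by (auto simp: basis_simps bform_def matrix_vector_mult_4 inner_vector_4 vector_4 entries
        algebra_simps)
  then show "a \<noteq> b \<Longrightarrow> bform G (basis a) (basis b) = 0"
    using exhaust_4[of a] exhaust_4[of b] bform_commute[OF symmetric] by metis
qed

lemma basis_independent:
  assumes "(\<Sum>a\<in>UNIV. y $ a *\<^sub>R basis a) = 0"
  shows "y = 0"
proof -
  have "y$1 * basis 1 $ i + y$2 * basis 2 $ i + y$3 * basis 3 $ i + y$4 * basis 4 $ i = 0" for i
    using arg_cong[OF assms, of "\<lambda>w. w $ i"] by (simp add: sum_4)
  from this[of 1] this[of 2] this[of 3] this[of 4]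
  have e: "y$2 + y$3 - y$1 * G$2$3 + y$4 * (cross * G$2$3 + 2 * triple * G$2$4) = 0"
    "G$1$2 * (y$2 - y$3) - y$1 * G$1$3 + y$4 * (cross * G$1$3 + 2 * triple * G$1$4) = 0"
    "G$1$2 * (y$1 - y$4 * cross) = 0" "y$4 * (triple * G$1$2) = 0"
    by (simp_all add: basis_simps vector_4 algebra_simps)
  have "triple * G$1$2 \<noteq> 0"
    using nonzero by (simp add: triple_def)
  with e(4) have "y$4 = 0"
    by simp
  with e(3) nonzero(1) have "y$1 = 0"
    by simp
  with e(1,2) \<open>y$4 = 0\<close> nonzero(1) have "y$2 = 0" "y$3 = 0"
    by simp_all
  with \<open>y$1 = 0\<close> \<open>y$4 = 0\<close> show "y = 0"
    by (simp add: vec_eq_iff forall_4)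
qed

lemma congruent:
  defines "Q \<equiv> heron (G$1$2 * G$3$4) (G$1$3 * G$2$4) (G$1$4 * G$2$3)"
  shows "congruent_to G (diag_mat (vector [- sgn triple, 1, -1, sgn triple * sgn Q]))"
    and "congruent_to G (diag_mat (vector [- sgn triple, 1, sgn triple * sgn Q, -1]))"
proof -
  have "sgn ((G$1$2)\<^sup>2) = 1"
    using nonzero(1) by (intro sgn_pos) simp
  then have signs: "sgn (bform G (basis 1) (basis 1)) = - sgn triple"
    "sgn (bform G (basis 2) (basis 2)) = 1" "sgn (bform G (basis 3) (basis 3)) = -1"
    "sgn (bform G (basis 4) (basis 4)) = sgn triple * sgn Q"
    by (simp_all add: bform_basis_self sgn_mult Q_def)
  have "(\<chi> a. sgn (bform G (basis a) (basis a))) = vector [- sgn triple, 1, -1, sgn triple * sgn Q]"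
    by (simp add: vec_eq_iff forall_4 vector_4 signs)
  with congruent_to_orthogonal_basis[where X = basis and M = G, OF basis_independent basis_orthogonal]
  show "congruent_to G (diag_mat (vector [- sgn triple, 1, -1, sgn triple * sgn Q]))"
    by simp
  define \<tau> where "\<tau> = Transposition.transpose (3::4) 4"
  have \<tau>: "\<tau> permutes UNIV" "\<tau> 1 = 1" "\<tau> 2 = 2" "\<tau> 3 = 4" "\<tau> 4 = 3"
    unfolding \<tau>_def by (simp_all add: permutes_swap_id Transposition.transpose_def)
  have "(\<chi> a. sgn (bform G (basis (\<tau> a)) (basis (\<tau> a)))) =
      vector [- sgn triple, 1, sgn triple * sgn Q, -1]"
    by (simp add: vec_eq_iff forall_4 vector_4 \<tau> signs)
  moreover have "bform G (basis (\<tau> a)) (basis (\<tau> b)) = 0" if "a \<noteq> b" for a b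
    using that \<tau>(1) by (intro basis_orthogonal) (metis permutes_inj injD)
  moreover have "y = 0" if "(\<Sum>a\<in>UNIV. y $ a *\<^sub>R basis (\<tau> a)) = 0" for y :: "real^4"
    using independent_family_permute[where X = basis, OF basis_independent \<tau>(1) that] .
  ultimately show "congruent_to G (diag_mat (vector [- sgn triple, 1, sgn triple * sgn Q, -1]))"
    using congruent_to_orthogonal_basis[where X = "\<lambda>a. basis (\<tau> a)" and M = G] by simp
qed

end

section \<open>Tetrahedra of flags\<close>

lemma idx_iff: "m \<in> idx \<longleftrightarrow> m = 1 \<or> m = 2 \<or> m = 3 \<or> m = (4::nat)"
  by (auto simp: idx_def)

lemma finite_idx [simp]: "finite idx"
  by (simp add: idx_def)

lemma sign_choice_square: "sign_choice s \<Longrightarrow> m \<in> idx \<Longrightarrow> s m * s m = 1"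
  unfolding sign_choice_def by auto

lemma edge_face_distinct:
  assumes "edge_face (i, j, k, l)"
  shows "i \<in> idx" "j \<in> idx" "k \<in> idx" "l \<in> idx" "distinct [i, j, k, l]"
proof -
  obtain p where p: "p permutes idx" "p 1 = i" "p 2 = j" "p 3 = k" "p 4 = l"
    using assms unfolding edge_face_def by auto
  have "{1, 2, 3, 4} \<subseteq> idx"
    by (simp add: idx_def)
  with p show "i \<in> idx" "j \<in> idx" "k \<in> idx" "l \<in> idx"
    by (auto simp: permutes_in_image)
  have "distinct [p 1, p 2, p 3, p 4]"
    using permutes_inj[OF p(1)] by (simp add: inj_eq)
  with p show "distinct [i, j, k, l]"
    by simp
qed

lemma transpose_comp_transpose_evenperm:
  assumes "b \<in> idx" "c \<in> idx" "d \<in> idx" "distinct [b, c, d]"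
  shows "Transposition.transpose b c \<circ> Transposition.transpose c d permutes idx"
    and "evenperm (Transposition.transpose b c \<circ> Transposition.transpose c d)"
  using assms by (auto intro!: permutes_compose permutes_swap_id
      simp: evenperm_comp permutation_swap_id evenperm_swap)

lemma edge_face_1234: "edge_face (1, 2, 3, 4)"
  unfolding edge_face_def prod.case by (intro exI[of _ id]) (simp add: permutes_id evenperm_id)

lemma edge_face_1342: "edge_face (1, 3, 4, 2)"
  unfolding edge_face_def prod.case using transpose_comp_transpose_evenperm[of 2 3 4]
  by (intro exI[of _ "Transposition.transpose 2 3 \<circ> Transposition.transpose 3 4"]) (simp add: idx_def)

lemma edge_face_1423: "edge_face (1, 4, 2, 3)"
  unfolding edge_face_def prod.case using transpose_comp_transpose_evenperm[of 4 3 2]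
  by (intro exI[of _ "Transposition.transpose 4 3 \<circ> Transposition.transpose 3 2"]) (simp add: idx_def)

lemma constant_sign_of_nonvanishing_positive_combinations:
  fixes x :: "'a \<Rightarrow> real"
  assumes "finite S"
    and nonzero: "\<And>lam. \<forall>i\<in>S. 0 < lam i \<Longrightarrow> (\<Sum>i\<in>S. lam i * x i) \<noteq> 0"
  shows "(\<forall>i\<in>S. 0 \<le> x i) \<or> (\<forall>i\<in>S. x i \<le> 0)"
proof (rule ccontr)
  assume "\<not> ?thesis"
  then obtain j k where jk: "j \<in> S" "x j < 0" "k \<in> S" "0 < x k"
    by (auto simp: not_le)
  define P where "P = (\<Sum>i\<in>S. max (x i) 0)"
  define N where "N = (\<Sum>i\<in>S. max (- x i) 0)"
  have "max (x k) 0 \<le> P" "max (- x j) 0 \<le> N"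
    unfolding P_def N_def by (intro member_le_sum jk \<open>finite S\<close>; simp)+
  then have "0 < P" "0 < N"
    using jk by simp_all
  \<comment> \<open>weights balancing the positive against the negative part of x\<close>
  define lam where "lam i = (if 0 < x i then N else P)" for i
  have "lam i * x i = N * max (x i) 0 - P * max (- x i) 0" for i
    by (cases "0 < x i") (simp_all add: lam_def max_def)
  then have "(\<Sum>i\<in>S. lam i * x i) = N * P - P * N"
    by (simp add: sum_subtractf flip: sum_distrib_left P_def N_def)
  moreover have "\<forall>i\<in>S. 0 < lam i"
    using \<open>0 < P\<close> \<open>0 < N\<close> by (simp add: lam_def)
  then have "(\<Sum>i\<in>S. lam i * x i) \<noteq> 0"
    by (rule nonzero)
  ultimately show False
    by simp
qed

lemma tetrahedron_of_flags_pairing: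
  assumes "tetrahedron_of_flags v eta" "i \<in> idx" "j \<in> idx"
  shows "ev (eta i) (v j) = 0 \<longleftrightarrow> i = j"
  using assms unfolding tetrahedron_of_flags_def by blast

lemma tetrahedron_of_flagsD:
  assumes "tetrahedron_of_flags v eta"
  shows "\<not> coplanar v" "m \<in> idx \<Longrightarrow> eta m \<noteq> 0"
    "\<exists>s. sign_choice s \<and> (\<forall>w\<in>tet_interior v s. \<forall>m\<in>idx. ev (eta m) w \<noteq> 0)"
  using assms by (simp_all add: tetrahedron_of_flags_def)

lemma pairing_row_sign:
  assumes s: "\<forall>w\<in>tet_interior v s. \<forall>m\<in>idx. ev (eta m) w \<noteq> 0" and i: "i \<in> idx"
  shows "(\<forall>j\<in>idx. 0 \<le> s j * ev (eta i) (v j)) \<or> (\<forall>j\<in>idx. s j * ev (eta i) (v j) \<le> 0)"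
proof (rule constant_sign_of_nonvanishing_positive_combinations[OF finite_idx])
  fix lam :: "nat \<Rightarrow> real"
  assume "\<forall>j\<in>idx. 0 < lam j"
  then have "(\<Sum>j\<in>idx. (lam j * s j) *\<^sub>R v j) \<in> tet_interior v s"
    unfolding tet_interior_def by (intro CollectI exI[of _ lam]) simp
  then have "ev (eta i) (\<Sum>j\<in>idx. (lam j * s j) *\<^sub>R v j) \<noteq> 0"
    using s i by blast
  then show "(\<Sum>j\<in>idx. lam j * (s j * ev (eta i) (v j))) \<noteq> 0"
    by (simp add: ev_def inner_sum_right mult.assoc)
qed

lemma tetrahedron_of_flags_signs:
  assumes T: "tetrahedron_of_flags v eta"
  obtains s \<epsilon> where "sign_choice s" "sign_choice \<epsilon>"
    "\<And>i j. i \<in> idx \<Longrightarrow> j \<in> idx \<Longrightarrow> i \<noteq> j \<Longrightarrow> 0 < \<epsilon> i * s j * ev (eta i) (v j)"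
proof -
  obtain s where s: "sign_choice s" "\<forall>w\<in>tet_interior v s. \<forall>m\<in>idx. ev (eta m) w \<noteq> 0"
    using tetrahedron_of_flagsD(3)[OF T] by blast
  define \<epsilon> where "\<epsilon> i = (if \<forall>j\<in>idx. 0 \<le> s j * ev (eta i) (v j) then 1 else -1 :: real)" for i
  show thesis
  proof (rule that[OF s(1)])
    show "sign_choice \<epsilon>"
      by (simp add: sign_choice_def \<epsilon>_def)
    fix i j
    assume ij: "i \<in> idx" "j \<in> idx" "i \<noteq> j"
    have "s j \<noteq> 0"
      using s(1) ij unfolding sign_choice_def by auto
    with tetrahedron_of_flags_pairing[OF T ij(1,2)] ij(3)
    have nz: "s j * ev (eta i) (v j) \<noteq> 0"
      by simp
    show "0 < \<epsilon> i * s j * ev (eta i) (v j)"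
    proof (cases "\<forall>j\<in>idx. 0 \<le> s j * ev (eta i) (v j)")
      case True
      then have "0 \<le> s j * ev (eta i) (v j)"
        using ij(2) by blast
      with nz show ?thesis
        by (simp add: \<epsilon>_def True mult.assoc less_le)
    next
      case False
      then have "s j * ev (eta i) (v j) \<le> 0"
        using pairing_row_sign[OF s(2) ij(1)] ij(2) by blast
      with nz show ?thesis
        by (simp add: \<epsilon>_def False mult.assoc less_le)
    qed
  qed
qed

lemma triple_ratio_pos:
  assumes T: "tetrahedron_of_flags v eta"
    and ijk: "i \<in> idx" "j \<in> idx" "k \<in> idx" "distinct [i, j, k]"
  shows "0 < triple_ratio v eta (i, j, k, l)"
proof -
  obtain s \<epsilon> where s: "sign_choice s" "sign_choice \<epsilon>"
    and pos: "\<And>i j. i \<in> idx \<Longrightarrow> j \<in> idx \<Longrightarrow> i \<noteq> j \<Longrightarrow> 0 < \<epsilon> i * s j * ev (eta i) (v j)"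
    using tetrahedron_of_flags_signs[OF T] by blast
  define b where "b x y = \<epsilon> x * s y * ev (eta x) (v y)" for x y
  define e where "e = \<epsilon> i * \<epsilon> j * \<epsilon> k * s i * s j * s k"
  \<comment> \<open>numerator and denominator carry the same sign factor e\<close>
  have "e \<noteq> 0"
    using s ijk unfolding e_def sign_choice_def by auto
  then have "triple_ratio v eta (i, j, k, l) =
      (e * (ev (eta i) (v j) * ev (eta j) (v k) * ev (eta k) (v i))) /
      (e * (ev (eta i) (v k) * ev (eta j) (v i) * ev (eta k) (v j)))"
    by (simp add: triple_ratio_def)
  also have "\<dots> = (b i j * b j k * b k i) / (b i k * b j i * b k j)"
    by (simp add: e_def b_def ac_simps)
  also have "\<dots> > 0"
    using ijk by (intro divide_pos_pos mult_pos_pos) (auto simp: b_def intro: pos)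
  finally show ?thesis .
qed

lemma edge_ratio_ef_op:
  assumes T: "tetrahedron_of_flags v eta"
    and ijkl: "i \<in> idx" "j \<in> idx" "k \<in> idx" "l \<in> idx" "distinct [i, j, k, l]"
  shows "edge_ratio v eta (ef_op (i, j, k, l)) =
    edge_ratio v eta (i, j, k, l) * triple_ratio v eta (i, j, k, l) * triple_ratio v eta (i, l, j, k)"
proof -
  define a where "a x y = ev (eta x) (v y)" for x y
  define K where "K = a i k * a j l * a i j * a j k * a i l * a j i"
  have "K \<noteq> 0"
    using ijkl tetrahedron_of_flags_pairing[OF T] by (auto simp: K_def a_def)
  have "edge_ratio v eta (i, j, k, l) * triple_ratio v eta (i, j, k, l) * triple_ratio v eta (i, l, j, k) =
      (a i k * a j l * (a i j * a j k * a k i) * (a i l * a l j * a j i)) /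
      (a i l * a j k * (a i k * a j i * a k j) * (a i j * a l i * a j l))"
    by (simp add: edge_ratio_def triple_ratio_def a_def times_divide_times_eq)
  also have "\<dots> = (K * (a k i * a l j)) / (K * (a k j * a l i))"
    by (simp add: K_def ac_simps)
  also have "\<dots> = edge_ratio v eta (ef_op (i, j, k, l))"
    using \<open>K \<noteq> 0\<close> by (simp add: edge_ratio_def ef_op_def a_def mult.commute)
  finally show ?thesis ..
qed

lemma positive_pairwise_products_one:
  fixes x y z :: real
  assumes "0 < x" "0 < y" "0 < z" "x * y = 1" "y * z = 1" "z * x = 1"
  shows "x = 1" "y = 1" "z = 1"
proof -
  have "y = z"
    using assms(1,4,6) by (metis mult.commute mult_left_cancel less_irrefl)
  then have "(y - 1) * (y + 1) = 0"
    using assms(5) by (simp add: algebra_simps)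
  then have "y = 1"
    using assms(2) by simp
  then show "x = 1" "y = 1" "z = 1"
    using assms(4) \<open>y = z\<close> by simp_all
qed

lemma base_edge_ratios_imp_triple_ratios:
  assumes T: "tetrahedron_of_flags v eta"
    and e: "edge_ratio v eta (1, 2, 3, 4) = edge_ratio v eta (ef_op (1, 2, 3, 4))"
      "edge_ratio v eta (1, 3, 4, 2) = edge_ratio v eta (ef_op (1, 3, 4, 2))"
      "edge_ratio v eta (1, 4, 2, 3) = edge_ratio v eta (ef_op (1, 4, 2, 3))"
  shows "triple_ratio v eta (1, 2, 3, 4) = 1" "triple_ratio v eta (1, 3, 4, 2) = 1"
    "triple_ratio v eta (1, 4, 2, 3) = 1"
proof -
  have I: "1 \<in> idx" "2 \<in> idx" "3 \<in> idx" "4 \<in> idx"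
    by (simp_all add: idx_def)
  have nz: "edge_ratio v eta (i, j, k, l) \<noteq> 0" if "i \<in> idx" "j \<in> idx" "k \<in> idx" "l \<in> idx"
    "distinct [i, j, k, l]" for i j k l
    using that tetrahedron_of_flags_pairing[OF T] by (simp add: edge_ratio_def)
  have "triple_ratio v eta (1, 2, 3, 4) * triple_ratio v eta (1, 4, 2, 3) = 1"
    "triple_ratio v eta (1, 3, 4, 2) * triple_ratio v eta (1, 2, 3, 4) = 1"
    "triple_ratio v eta (1, 4, 2, 3) * triple_ratio v eta (1, 3, 4, 2) = 1"
    using e edge_ratio_ef_op[OF T I(1,2,3,4)] edge_ratio_ef_op[OF T I(1,3,4,2)]
      edge_ratio_ef_op[OF T I(1,4,2,3)] nz[OF I(1,2,3,4)] nz[OF I(1,3,4,2)] nz[OF I(1,4,2,3)]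
    by (simp_all add: mult.assoc)
  moreover have "0 < triple_ratio v eta (1, 2, 3, 4)" "0 < triple_ratio v eta (1, 3, 4, 2)"
    "0 < triple_ratio v eta (1, 4, 2, 3)"
    by (simp_all add: triple_ratio_pos[OF T] idx_def)
  ultimately show "triple_ratio v eta (1, 2, 3, 4) = 1" "triple_ratio v eta (1, 3, 4, 2) = 1"
    "triple_ratio v eta (1, 4, 2, 3) = 1"
    using positive_pairwise_products_one by metis+
qed

section \<open>Symmetric rescalings of the pairing matrix\<close>

text \<open>For an inscribed tetrahedron, g is the Gram matrix of the vertices.\<close>
definition symmetric_rescaling ::
    "(nat \<Rightarrow> real^4) \<Rightarrow> (nat \<Rightarrow> real^4) \<Rightarrow> (nat \<Rightarrow> real) \<Rightarrow> (nat \<Rightarrow> nat \<Rightarrow> real) \<Rightarrow> bool" where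
  "symmetric_rescaling v eta c g \<longleftrightarrow>
     (\<forall>i\<in>idx. c i \<noteq> 0 \<and> (\<forall>j\<in>idx. c i * ev (eta i) (v j) = g i j \<and> g j i = g i j))"

lemma symmetric_rescalingD:
  assumes "symmetric_rescaling v eta c g" "i \<in> idx" "j \<in> idx"
  shows "c i \<noteq> 0" "ev (eta i) (v j) = g i j / c i" "c i * ev (eta i) (v j) = g i j" "g j i = g i j"
  using assms unfolding symmetric_rescaling_def by (metis nonzero_mult_div_cancel_left)+

lemma symmetric_rescaling_nonzero:
  assumes T: "tetrahedron_of_flags v eta" and S: "symmetric_rescaling v eta c g"
    and "i \<in> idx" "j \<in> idx" "i \<noteq> j"
  shows "g i j \<noteq> 0"
  using assms symmetric_rescalingD[OF S] tetrahedron_of_flags_pairing[OF T] by auto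

lemma symmetric_rescaling_triple_ratio:
  assumes T: "tetrahedron_of_flags v eta" and S: "symmetric_rescaling v eta c g"
    and ijk: "i \<in> idx" "j \<in> idx" "k \<in> idx" "distinct [i, j, k]"
  shows "triple_ratio v eta (i, j, k, l) = 1"
proof -
  note g = symmetric_rescalingD[OF S] and nz = symmetric_rescaling_nonzero[OF T S]
  show ?thesis
    using ijk nz[of i j] nz[of i k] nz[of j k] g(1)[of i i] g(1)[of j j] g(1)[of k k]
    by (simp add: triple_ratio_def g(2) g(4)[of i j] g(4)[of i k] g(4)[of j k] field_simps)
qed

lemma symmetric_rescaling_edge_face:
  assumes T: "tetrahedron_of_flags v eta" and S: "symmetric_rescaling v eta c g"
    and \<sigma>: "edge_face \<sigma>"
  shows "triple_ratio v eta \<sigma> = 1" "edge_ratio v eta \<sigma> = edge_ratio v eta (ef_op \<sigma>)"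
proof -
  obtain i j k l where \<sigma>_def: "\<sigma> = (i, j, k, l)"
    by (cases \<sigma>) auto
  note ijkl = edge_face_distinct[OF \<sigma>[unfolded \<sigma>_def]]
  show "triple_ratio v eta \<sigma> = 1"
    unfolding \<sigma>_def using ijkl by (intro symmetric_rescaling_triple_ratio[OF T S]) auto
  show "edge_ratio v eta \<sigma> = edge_ratio v eta (ef_op \<sigma>)"
    unfolding \<sigma>_def edge_ratio_ef_op[OF T ijkl] using ijkl
    by (simp add: symmetric_rescaling_triple_ratio[OF T S])
qed

lemma heron_edge_face_invariant:
  assumes sym: "\<And>i j. i \<in> idx \<Longrightarrow> j \<in> idx \<Longrightarrow> g j i = g i j"
    and "i \<in> idx" "j \<in> idx" "k \<in> idx" "l \<in> idx" "distinct [i, j, k, l]"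
  shows "heron (g i j * g k l) (g i k * g j l) (g i l * g j k) =
    heron (g 1 2 * g 3 4) (g 1 3 * g 2 4) (g 1 4 * g 2 3)"
proof -
  have s: "g 2 1 = g 1 2" "g 3 1 = g 1 3" "g 4 1 = g 1 4" "g 3 2 = g 2 3" "g 4 2 = g 2 4" "g 4 3 = g 3 4"
    by (simp_all add: sym idx_def)
  have h: "heron x y z = heron y x z" "heron x y z = heron x z y" for x y z
    by (simp_all add: heron_def algebra_simps)
  \<comment> \<open>the three products are permuted among themselves\<close>
  from assms(2-6) show ?thesis
    by (auto simp: idx_iff s s[unfolded One_nat_def] mult.commute h)
qed

lemma symmetric_rescaling_j_inv:
  assumes T: "tetrahedron_of_flags v eta" and S: "symmetric_rescaling v eta c g"
    and ijkl: "i \<in> idx" "j \<in> idx" "k \<in> idx" "l \<in> idx" "distinct [i, j, k, l]"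
  shows "j_inv v eta (i, j, k, l) =
    - heron (g i j * g k l) (g i k * g j l) (g i l * g j k) / (4 * (g i l * g j k)\<^sup>2)"
proof -
  note g = symmetric_rescalingD[OF S] and nz = symmetric_rescaling_nonzero[OF T S]
  define x where "x = g i j * g k l"
  define y where "y = g i k * g j l"
  define z where "z = g i l * g j k"
  have xyz: "x \<noteq> 0" "y \<noteq> 0" "z \<noteq> 0"
    using ijkl nz by (simp_all add: x_def y_def z_def)
  have e: "edge_ratio v eta (i, j, k, l) = y / z"
    and e_minus: "edge_ratio v eta (ef_minus (i, j, k, l)) = x / y"
    and e_plus: "edge_ratio v eta (ef_plus (i, j, k, l)) = z / x"
    using ijkl nz g(1)[of i i] g(1)[of j j] g(1)[of k k] g(1)[of l l]
    by (simp_all add: edge_ratio_def ef_minus_def ef_plus_def x_def y_def z_def g(2)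
        g(4)[of i j] g(4)[of i k] g(4)[of j k] g(4)[of i l] g(4)[of j l] g(4)[of k l] field_simps)
  have X: "X_inv v eta (i, j, k, l) = (y + z - x) / (2 * z)"
    using xyz symmetric_rescaling_triple_ratio[OF T S ijkl(1-3)] ijkl(5)
    by (simp add: X_inv_def mu_inv_def e e_minus e_plus field_simps)
  show ?thesis
    unfolding j_inv_def X e using xyz
    by (simp add: heron_def field_simps power2_eq_square flip: x_def y_def z_def)
qed

text \<open>Symmetry of c_i eta_i(v_j) forces c_i / c_1 = eta_1(v_i) / eta_i(v_1).\<close>
definition base_rescaling :: "(nat \<Rightarrow> real^4) \<Rightarrow> (nat \<Rightarrow> real^4) \<Rightarrow> real \<Rightarrow> nat \<Rightarrow> real" where
  "base_rescaling v eta \<kappa> i = (if i = 1 then \<kappa> else \<kappa> * ev (eta 1) (v i) / ev (eta i) (v 1))"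

lemma base_rescaling_symmetric:
  assumes T: "tetrahedron_of_flags v eta"
    and t123: "triple_ratio v eta (1, 2, 3, 4) = 1" and t134: "triple_ratio v eta (1, 3, 4, 2) = 1"
    and t142: "triple_ratio v eta (1, 4, 2, 3) = 1"
    and ij: "i \<in> idx" "j \<in> idx"
  shows "base_rescaling v eta \<kappa> j * ev (eta j) (v i) = base_rescaling v eta \<kappa> i * ev (eta i) (v j)"
proof -
  define a where "a i j = ev (eta i) (v j)" for i j
  define g where "g i j = base_rescaling v eta \<kappa> i * a i j" for i j
  have a: "a i j \<noteq> 0" if "i \<in> idx" "j \<in> idx" "i \<noteq> j" for i j
    using tetrahedron_of_flags_pairing[OF T that(1,2)] that(3) by (simp add: a_def)
  have I: "1 \<in> idx" "2 \<in> idx" "3 \<in> idx" "4 \<in> idx"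
    by (simp_all add: idx_def)
  have g_sym_1: "g j 1 = g 1 j" if "j \<in> idx" for j
    using a[OF that I(1)] by (cases "j = 1") (simp_all add: g_def base_rescaling_def a_def)
  have g_sym_pair: "g j i = g i j"
    if "i \<in> idx" "j \<in> idx" "distinct [1, i, j]" "triple_ratio v eta (1, i, j, l) = 1" for i j l
  proof -
    have "a 1 i * a i j * a j 1 = a 1 j * a j i * a i 1"
      using that(4) a[OF I(1) that(1)] a[OF I(1) that(2)] a[OF that(1) I(1)] a[OF that(2) I(1)]
        a[OF that(1,2)] that(3) by (simp add: triple_ratio_def a_def field_simps)
    then show ?thesis
      using that(3) a[OF that(1) I(1)] a[OF that(2) I(1)]
      by (simp add: g_def base_rescaling_def a_def field_simps)
  qed
  have "g 3 2 = g 2 3" "g 4 3 = g 3 4" "g 2 4 = g 4 2"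
    using g_sym_pair[OF I(2,3) _ t123] g_sym_pair[OF I(3,4) _ t134] g_sym_pair[OF I(4,2) _ t142]
    by simp_all
  moreover have "g 2 1 = g 1 2" "g 3 1 = g 1 3" "g 4 1 = g 1 4"
    using g_sym_1 I by simp_all
  ultimately have "g j i = g i j"
    using ij unfolding idx_iff by (elim disjE) simp_all
  then show ?thesis
    by (simp add: g_def a_def)
qed

lemma base_rescaling_sign:
  assumes T: "tetrahedron_of_flags v eta" and s: "sign_choice s" "sign_choice \<epsilon>"
    and pos: "\<And>i j. i \<in> idx \<Longrightarrow> j \<in> idx \<Longrightarrow> i \<noteq> j \<Longrightarrow> 0 < \<epsilon> i * s j * ev (eta i) (v j)"
    and i: "i \<in> idx"
  shows "\<epsilon> i * s i * base_rescaling v eta (- (\<epsilon> 1 * s 1)) i < 0"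
proof (cases "i = 1")
  case True
  then show ?thesis
    using sign_choice_square[OF s(1) i] sign_choice_square[OF s(2) i]
    by (simp add: base_rescaling_def algebra_simps)
next
  case False
  define a where "a i j = ev (eta i) (v j)" for i j
  have "1 \<in> idx"
    by (simp add: idx_def)
  have "a i 1 \<noteq> 0"
    using tetrahedron_of_flags_pairing[OF T i \<open>1 \<in> idx\<close>] False by (simp add: a_def)
  then have "\<epsilon> i * s i * base_rescaling v eta (- (\<epsilon> 1 * s 1)) i =
      - ((\<epsilon> 1 * s i * a 1 i) * (\<epsilon> i * s 1 * a i 1)) / (a i 1 * a i 1)"
    using False by (simp add: base_rescaling_def a_def field_simps)
  also have "\<dots> < 0"
  proof -
    have "0 < (\<epsilon> 1 * s i * a 1 i) * (\<epsilon> i * s 1 * a i 1)"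
      by (rule mult_pos_pos) (use False i \<open>1 \<in> idx\<close> pos[of 1 i] pos[of i 1] in \<open>simp_all add: a_def\<close>)
    moreover have "0 < a i 1 * a i 1"
      using \<open>a i 1 \<noteq> 0\<close> not_real_square_gt_zero by blast
    ultimately have "0 < (\<epsilon> 1 * s i * a 1 i) * (\<epsilon> i * s 1 * a i 1) / (a i 1 * a i 1)"
      by (rule divide_pos_pos)
    then show ?thesis
      by simp
  qed
  finally show ?thesis .
qed

lemma base_triple_ratios_imp_symmetric_rescaling:
  assumes T: "tetrahedron_of_flags v eta"
    and t: "triple_ratio v eta (1, 2, 3, 4) = 1" "triple_ratio v eta (1, 3, 4, 2) = 1"
      "triple_ratio v eta (1, 4, 2, 3) = 1"
  obtains s c g where "sign_choice s" "symmetric_rescaling v eta c g"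
    "\<And>i j. i \<in> idx \<Longrightarrow> j \<in> idx \<Longrightarrow> i \<noteq> j \<Longrightarrow> s i * s j * g i j < 0"
proof -
  obtain s \<epsilon> where s: "sign_choice s" "sign_choice \<epsilon>"
    and pos: "\<And>i j. i \<in> idx \<Longrightarrow> j \<in> idx \<Longrightarrow> i \<noteq> j \<Longrightarrow> 0 < \<epsilon> i * s j * ev (eta i) (v j)"
    using tetrahedron_of_flags_signs[OF T] by blast
  define c where "c = base_rescaling v eta (- (\<epsilon> 1 * s 1))"
  define g where "g i j = c i * ev (eta i) (v j)" for i j
  have c_sign: "\<epsilon> i * s i * c i < 0" if "i \<in> idx" for i
    unfolding c_def by (rule base_rescaling_sign[OF T s(1) s(2)]) (use pos that in auto)
  have "symmetric_rescaling v eta c g"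
    unfolding symmetric_rescaling_def g_def c_def
    using c_sign base_rescaling_symmetric[OF T t] by (fastforce simp: c_def)
  moreover have "s i * s j * g i j < 0" if ij: "i \<in> idx" "j \<in> idx" "i \<noteq> j" for i j
  proof -
    have "s i * s j * g i j = (\<epsilon> i * s i * c i) * (\<epsilon> i * s j * ev (eta i) (v j))"
      using sign_choice_square[OF s(2) ij(1)] by (simp add: g_def algebra_simps)
    also have "\<dots> < 0"
      using c_sign[OF ij(1)] pos[OF ij] by (simp add: mult_neg_pos)
    finally show ?thesis .
  qed
  ultimately show thesis
    using that[OF s(1)] by blast
qed

section \<open>Inscribed tetrahedra\<close>

definition vertex_index :: "4 \<Rightarrow> nat" where
  "vertex_index a = (if a = 1 then 1 else if a = 2 then 2 else if a = 3 then 3 else 4)"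

definition vertex_matrix :: "(nat \<Rightarrow> real^4) \<Rightarrow> real^4^4" where
  "vertex_matrix v = (\<chi> r a. v (vertex_index a) $ r)"

lemma vertex_index_idx: "vertex_index a \<in> idx"
  by (simp add: vertex_index_def idx_def)

lemma vertex_index_of_nat: "m \<in> idx \<Longrightarrow> vertex_index (of_nat m) = m"
  by (auto simp: idx_iff vertex_index_def)

lemma vertex_index_numeral [simp]:
  "vertex_index 1 = 1" "vertex_index 2 = 2" "vertex_index 3 = 3" "vertex_index 4 = 4"
  by (simp_all add: vertex_index_def)
lemma vertex_matrix_invertible:
  assumes "\<not> coplanar v"
  shows "invertible (vertex_matrix v)"
proof -
  have "e = 0" if "transpose (vertex_matrix v) *v e = 0" for e :: "real^4"
  proof -
    have "v (vertex_index a) \<bullet> e = 0" for a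
      using arg_cong[OF that, of "\<lambda>w. w $ a"]
      by (simp add: vertex_matrix_def transpose_def matrix_vector_mult_def inner_vec_def mult.commute)
    then have "\<forall>m\<in>idx. ev e (v m) = 0"
      by (metis vertex_index_of_nat ev_def inner_commute)
    with assms show "e = 0"
      unfolding coplanar_def by blast
  qed
  then show ?thesis
    unfolding invertible_right_inverse
    by (simp flip: left_invertible_transpose add: matrix_left_invertible_ker)
qed

lemma vertex_matrix_axis: "vertex_matrix v *v axis a 1 = v (vertex_index a)"
proof -
  have "vertex_matrix v *v axis a 1 = (\<Sum>b\<in>UNIV. (axis a 1 :: real^4) $ b *\<^sub>R v (vertex_index b))"
    unfolding vertex_matrix_def by (rule matrix_columns_mult)
  also have "\<dots> = (\<Sum>b\<in>UNIV. if a = b then v (vertex_index b) else 0)"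
    by (rule sum.cong) (simp_all add: axis_def)
  also have "\<dots> = v (vertex_index a)"
    by (subst sum.delta') simp_all
  finally show ?thesis .
qed

lemma gram_vertex_matrix:
  "(transpose (vertex_matrix v) ** M ** vertex_matrix v) $ a $ b =
    bform M (v (vertex_index a)) (v (vertex_index b))"
  unfolding vertex_matrix_def by (rule congruence_matrix_columns)

locale isotropic_basis =
  fixes M :: "real^4^4" and v :: "nat \<Rightarrow> real^4" and g :: "nat \<Rightarrow> nat \<Rightarrow> real"
  assumes symmetric: "transpose M = M"
    and noncoplanar: "\<not> coplanar v"
    and gram: "\<And>i j. i \<in> idx \<Longrightarrow> j \<in> idx \<Longrightarrow> bform M (v i) (v j) = g i j"
    and isotropic: "\<And>m. m \<in> idx \<Longrightarrow> g m m = 0"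
    and nonzero: "g 1 2 \<noteq> 0" "g 1 3 \<noteq> 0" "g 2 3 \<noteq> 0"
begin

lemma congruent:
  defines "p \<equiv> g 1 2 * g 1 3 * g 2 3"
    and "Q \<equiv> heron (g 1 2 * g 3 4) (g 1 3 * g 2 4) (g 1 4 * g 2 3)"
  shows "congruent_to M (diag_mat (vector [- sgn p, 1, -1, sgn p * sgn Q]))"
    and "congruent_to M (diag_mat (vector [- sgn p, 1, sgn p * sgn Q, -1]))"
proof -
  define G where "G = transpose (vertex_matrix v) ** M ** vertex_matrix v"
  have G: "G $ a $ b = g (vertex_index a) (vertex_index b)" for a b
    unfolding G_def gram_vertex_matrix using gram vertex_index_idx by simp
  have "transpose G = G"
    unfolding G_def using symmetric by (simp add: matrix_transpose_mul matrix_mul_assoc)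
  moreover have "G $ a $ a = 0" for a
    using isotropic vertex_index_idx by (simp add: G)
  moreover have "G$1$2 \<noteq> 0" "G$1$3 \<noteq> 0" "G$2$3 \<noteq> 0"
    using nonzero by (simp_all add: G)
  ultimately have zd: "zero_diagonal G"
    by unfold_locales
  then have "congruent_to G (diag_mat (vector [- sgn p, 1, -1, sgn p * sgn Q]))"
    "congruent_to G (diag_mat (vector [- sgn p, 1, sgn p * sgn Q, -1]))"
    using zero_diagonal.congruent[OF zd] by (simp_all add: zero_diagonal.triple_def G p_def Q_def)
  then show "congruent_to M (diag_mat (vector [- sgn p, 1, -1, sgn p * sgn Q]))"
    "congruent_to M (diag_mat (vector [- sgn p, 1, sgn p * sgn Q, -1]))"
    using congruent_to_of_congruent vertex_matrix_invertible[OF noncoplanar] unfolding G_def by blast+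
qed

lemma det_sgn: "sgn (det M) = sgn (heron (g 1 2 * g 3 4) (g 1 3 * g 2 4) (g 1 4 * g 2 3))"
proof -
  define p where "p = g 1 2 * g 1 3 * g 2 3"
  define Q where "Q = heron (g 1 2 * g 3 4) (g 1 3 * g 2 4) (g 1 4 * g 2 3)"
  have "sgn p * sgn p = 1"
    using nonzero by (simp add: p_def)
  then have det: "det (diag_mat (vector [- sgn p, 1, -1, sgn p * sgn Q])) = sgn Q"
    by (simp add: det_diag_mat vector_4 mult.assoc[symmetric])
  have "sgn (det M) = sgn (det (diag_mat (vector [- sgn p, 1, -1, sgn p * sgn Q])))"
    unfolding p_def Q_def by (rule congruent_to_sgn_det[OF congruent(1)])
  then have "sgn (det M) = sgn Q"
    unfolding det by simp
  then show ?thesis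
    unfolding Q_def .
qed

lemma form_type:
  assumes "g 1 2 * g 1 3 * g 2 3 < 0"
  shows "hyperbolic_form M \<or> ads_form M \<or> halfpipe_form M"
proof -
  define Q where "Q = heron (g 1 2 * g 3 4) (g 1 3 * g 2 4) (g 1 4 * g 2 3)"
  have c: "congruent_to M (diag_mat (vector [1, 1, -1, - sgn Q]))"
    "congruent_to M (diag_mat (vector [1, 1, - sgn Q, -1]))"
    using congruent assms by (simp_all add: Q_def)
  consider "Q < 0" | "Q > 0" | "Q = 0"
    by linarith
  then show ?thesis
    by cases (use c symmetric in \<open>simp_all add: hyperbolic_form_def ads_form_def halfpipe_form_def\<close>)
qed

end

lemma form_det_sgn:
  "hyperbolic_form M \<Longrightarrow> det M < 0" "ads_form M \<Longrightarrow> 0 < det M" "halfpipe_form M \<Longrightarrow> det M = 0"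
  unfolding hyperbolic_form_def ads_form_def halfpipe_form_def
  by (auto dest!: congruent_to_sgn_det simp: det_diag_mat vector_4 sgn_1_neg sgn_1_pos sgn_0_0)

lemma symmetric_transpose_inverse_mult:
  fixes F V W :: "real^4^4"
  assumes "V ** W = mat 1" and "transpose (F ** V) = F ** V"
  shows "transpose (transpose W ** F) = transpose W ** F"
proof -
  define G where "G = F ** V"
  have "transpose W ** F = transpose W ** G ** W"
    using assms(1) by (simp add: G_def flip: matrix_mul_assoc)
  moreover have "transpose G = G"
    using assms(2) by (simp add: G_def)
  ultimately show ?thesis
    by (simp add: matrix_transpose_mul matrix_mul_assoc)
qed

lemma form_of_symmetric_rescaling:
  assumes nc: "\<not> coplanar v" and S: "symmetric_rescaling v eta c g"
  obtains M where "transpose M = M" "\<And>m y. m \<in> idx \<Longrightarrow> bform M (v m) y = c m * ev (eta m) y"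
proof -
  define V where "V = vertex_matrix v"
  obtain W where W: "W ** V = mat 1" "V ** W = mat 1"
    using vertex_matrix_invertible[OF nc] unfolding V_def invertible_def by blast
  \<comment> \<open>the rows of F are the rescaled covectors, so F ** V is the matrix g\<close>
  define F :: "real^4^4" where "F = (\<chi> a b. c (vertex_index a) * eta (vertex_index a) $ b)"
  define M where "M = transpose W ** F"
  have Fv: "(F *v y) $ a = c (vertex_index a) * ev (eta (vertex_index a)) y" for y a
    by (simp add: F_def matrix_vector_mult_def ev_def inner_vec_def sum_distrib_left mult.assoc)
  have Wv: "W *v v m = axis (of_nat m) 1" if "m \<in> idx" for m
  proof -
    have "W *v v m = (W ** V) *v axis (of_nat m) 1"
      by (simp add: V_def vertex_matrix_axis vertex_index_of_nat[OF that] flip: matrix_vector_mul_assoc)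
    then show ?thesis
      using W(1) by simp
  qed
  have tangent: "bform M (v m) y = c m * ev (eta m) y" if "m \<in> idx" for m y
  proof -
    have "bform M (v m) y = (F *v y) \<bullet> (W *v v m)"
      unfolding bform_def M_def
      by (simp add: inner_commute flip: matrix_vector_mul_assoc dot_lmul_matrix)
    then show ?thesis
      by (simp add: Wv[OF that] inner_axis Fv vertex_index_of_nat[OF that])
  qed
  have "transpose (F ** V) = F ** V"
  proof -
    have "(F ** V) $ a $ b = g (vertex_index a) (vertex_index b)" for a b
      using S vertex_index_idx unfolding symmetric_rescaling_def
      by (simp add: F_def V_def vertex_matrix_def matrix_matrix_mult_def ev_def inner_vec_def
          sum_distrib_left mult.assoc)
    then show ?thesis
      using symmetric_rescalingD(4)[OF S vertex_index_idx vertex_index_idx]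
      by (simp add: vec_eq_iff transpose_def)
  qed
  then have "transpose M = M"
    unfolding M_def by (rule symmetric_transpose_inverse_mult[OF W(2)])
  then show thesis
    using that tangent by blast
qed

lemma tet_interior_negative:
  assumes sym: "transpose M = M"
    and gram: "\<And>i j. i \<in> idx \<Longrightarrow> j \<in> idx \<Longrightarrow> bform M (v i) (v j) = g i j"
    and iso: "\<And>m. m \<in> idx \<Longrightarrow> g m m = 0"
    and neg: "\<And>i j. i \<in> idx \<Longrightarrow> j \<in> idx \<Longrightarrow> i \<noteq> j \<Longrightarrow> s i * s j * g i j < 0"
    and interior: "w \<in> tet_interior v s"
  shows "bform M w w < 0"
proof -
  obtain lam where lam: "\<forall>m\<in>idx. 0 < lam m" and w: "w = (\<Sum>m\<in>idx. (lam m * s m) *\<^sub>R v m)"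
    using interior unfolding tet_interior_def by blast
  define f where "f i j = (lam i * s i) * ((lam j * s j) * g j i)" for i j
  have f_neg: "f i j < 0" if "i \<in> idx" "j \<in> idx" "i \<noteq> j" for i j
  proof -
    have "f i j = (lam i * lam j) * (s j * s i * g j i)"
      by (simp add: f_def algebra_simps)
    moreover have "0 < lam i * lam j"
      using lam that by simp
    ultimately show ?thesis
      using neg[of j i] that by (simp add: mult_pos_neg)
  qed
  have f_nonpos: "f i j \<le> 0" if "i \<in> idx" "j \<in> idx" for i j
    using f_neg[OF that] iso[OF that(1)] by (cases "i = j") (simp_all add: f_def)
  have expand: "bform M w x = (\<Sum>i\<in>idx. (lam i * s i) * bform M (v i) x)" for x
    unfolding w by (simp add: bform_sum_left bform_scaleR_left)
  have "bform M (v i) w = (\<Sum>j\<in>idx. (lam j * s j) * g j i)" if "i \<in> idx" for i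
    unfolding bform_commute[OF sym, of "v i" w] expand by (simp add: gram that)
  then have "bform M w w = (\<Sum>i\<in>idx. \<Sum>j\<in>idx. f i j)"
    unfolding expand[of w] f_def by (simp add: sum_distrib_left)
  also have "\<dots> < (\<Sum>i\<in>idx. 0)"
  proof (rule sum_strict_mono_ex1)
    show "\<forall>i\<in>idx. (\<Sum>j\<in>idx. f i j) \<le> 0"
      using f_nonpos by (simp add: sum_nonpos)
    have "(\<Sum>j\<in>idx. f 1 j) < (\<Sum>j\<in>idx. 0)"
      using f_nonpos f_neg by (intro sum_strict_mono_ex1) (auto simp: idx_def)
    then show "\<exists>i\<in>idx. (\<Sum>j\<in>idx. f i j) < 0"
      by (auto simp: idx_def)
  qed simp
  finally show ?thesis
    by simp
qed

lemma sign_pattern_triple_neg: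
  assumes s: "sign_choice s"
    and neg: "\<And>i j. i \<in> idx \<Longrightarrow> j \<in> idx \<Longrightarrow> i \<noteq> j \<Longrightarrow> s i * s j * g i j < 0"
  shows "g 1 2 * g 1 3 * g 2 3 < 0"
proof -
  have sq: "s 1 * s 1 = 1" "s 2 * s 2 = 1" "s 3 * s 3 = 1"
    using sign_choice_square[OF s] by (simp_all add: idx_def)
  have "g 1 2 * g 1 3 * g 2 3 = (s 1 * s 1) * (s 2 * s 2) * (s 3 * s 3) * (g 1 2 * g 1 3 * g 2 3)"
    unfolding sq by simp
  also have "\<dots> = (s 1 * s 2 * g 1 2) * (s 1 * s 3 * g 1 3) * (s 2 * s 3 * g 2 3)"
    by (simp add: algebra_simps)
  also have "\<dots> < 0"
    using neg[of 1 2] neg[of 1 3] neg[of 2 3] by (simp add: idx_def mult_neg_neg mult_pos_neg)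
  finally show ?thesis .
qed

lemma symmetric_rescaling_inscribed:
  assumes T: "tetrahedron_of_flags v eta" and S: "symmetric_rescaling v eta c g"
    and s: "sign_choice s" and neg: "\<And>i j. i \<in> idx \<Longrightarrow> j \<in> idx \<Longrightarrow> i \<noteq> j \<Longrightarrow> s i * s j * g i j < 0"
  shows "inscribed_tetrahedron_of_flags v eta"
proof -
  note nc = tetrahedron_of_flagsD(1)[OF T]
  obtain M where sym: "transpose M = M"
    and tangent: "\<And>m y. m \<in> idx \<Longrightarrow> bform M (v m) y = c m * ev (eta m) y"
    using form_of_symmetric_rescaling[OF nc S] by blast
  have gram: "bform M (v i) (v j) = g i j" if "i \<in> idx" "j \<in> idx" for i j
    using tangent[OF that(1)] symmetric_rescalingD(3)[OF S that] by simp
  have iso: "g m m = 0" if "m \<in> idx" for m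
    using symmetric_rescalingD(3)[OF S that that] tetrahedron_of_flags_pairing[OF T that that] by simp
  have "inscribed_in v eta M"
    unfolding inscribed_in_def
  proof (intro conjI ballI)
    show "\<exists>s. sign_choice s \<and> (\<forall>w\<in>tet_interior v s. bform M w w < 0)"
      using s tet_interior_negative[where M = M and g = g and v = v and s = s, OF sym gram iso neg]
      by blast
  next
    fix m assume m: "m \<in> idx"
    show "bform M (v m) (v m) = 0"
      using gram[OF m m] iso[OF m] by simp
    have "eta m \<noteq> 0" "c m \<noteq> 0"
      using tetrahedron_of_flagsD(2)[OF T m] symmetric_rescalingD(1)[OF S m m] by auto
    then have "bform M (v m) (eta m) \<noteq> 0"
      by (simp add: tangent[OF m] ev_def)
    then show "\<not> in_radical M (v m)"
      unfolding in_radical_def by blast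
    show "\<exists>c. c \<noteq> 0 \<and> (\<forall>y. bform M (v m) y = c * ev (eta m) y)"
      using tangent[OF m] \<open>c m \<noteq> 0\<close> by blast
  qed
  moreover have "isotropic_basis M v g"
    by unfold_locales (use sym nc gram iso symmetric_rescaling_nonzero[OF T S] in \<open>auto simp: idx_def\<close>)
  then have "hyperbolic_form M \<or> ads_form M \<or> halfpipe_form M"
    using isotropic_basis.form_type sign_pattern_triple_neg[where g = g, OF s neg] by blast
  ultimately show ?thesis
    unfolding inscribed_tetrahedron_of_flags_def inscribed_hyperbolic_def inscribed_ads_def
      inscribed_halfpipe_def by blast
qed

lemma inscribed_in_symmetric_rescaling:
  assumes "inscribed_in v eta M" and sym: "transpose M = M"
  obtains c where "symmetric_rescaling v eta c (\<lambda>i j. bform M (v i) (v j))"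
proof -
  have "\<forall>m\<in>idx. \<exists>c. c \<noteq> 0 \<and> (\<forall>y. bform M (v m) y = c * ev (eta m) y)"
    using assms(1) unfolding inscribed_in_def by blast
  then obtain c where "\<forall>m\<in>idx. c m \<noteq> 0 \<and> (\<forall>y. bform M (v m) y = c m * ev (eta m) y)"
    by (rule bchoice[elim_format]) blast
  then have "symmetric_rescaling v eta c (\<lambda>i j. bform M (v i) (v j))"
  proof (unfold symmetric_rescaling_def, intro ballI conjI)
    fix i j
    assume "\<forall>m\<in>idx. c m \<noteq> 0 \<and> (\<forall>y. bform M (v m) y = c m * ev (eta m) y)" "i \<in> idx"
    then show "c i \<noteq> 0" "c i * ev (eta i) (v j) = bform M (v i) (v j)"
      by simp_all
    show "bform M (v j) (v i) = bform M (v i) (v j)"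
      by (rule bform_commute[OF sym])
  qed
  then show thesis
    by (rule that)
qed

lemma inscribed_j_inv_sgn:
  assumes T: "tetrahedron_of_flags v eta" and I: "inscribed_in v eta M" and sym: "transpose M = M"
    and \<sigma>: "edge_face \<sigma>"
  shows "sgn (j_inv v eta \<sigma>) = - sgn (det M)"
proof -
  define g where "g i j = bform M (v i) (v j)" for i j
  obtain c where S: "symmetric_rescaling v eta c g"
    using inscribed_in_symmetric_rescaling[OF I sym] unfolding g_def by blast
  obtain i j k l where \<sigma>_def: "\<sigma> = (i, j, k, l)"
    by (cases \<sigma>) auto
  note ijkl = edge_face_distinct[OF \<sigma>[unfolded \<sigma>_def]]
  interpret isotropic_basis M v g
  proof
    show "\<not> coplanar v"
      using tetrahedron_of_flagsD(1)[OF T] .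
    show "g m m = 0" if "m \<in> idx" for m
      using I that unfolding inscribed_in_def g_def by blast
    show "g 1 2 \<noteq> 0" "g 1 3 \<noteq> 0" "g 2 3 \<noteq> 0"
      using symmetric_rescaling_nonzero[OF T S] by (simp_all add: idx_def)
  qed (simp_all add: sym g_def)
  have D: "0 < 4 * (g i l * g j k)\<^sup>2"
    using ijkl symmetric_rescaling_nonzero[OF T S] by simp
  have H: "heron (g i j * g k l) (g i k * g j l) (g i l * g j k) =
      heron (g 1 2 * g 3 4) (g 1 3 * g 2 4) (g 1 4 * g 2 3)"
    using ijkl symmetric_rescalingD(4)[OF S] by (intro heron_edge_face_invariant) auto
  show ?thesis
    unfolding \<sigma>_def symmetric_rescaling_j_inv[OF T S ijkl] H sgn_divide sgn_minus sgn_pos[OF D] det_sgn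
    by simp
qed

lemma inscribed_type_by_j_inv:
  assumes T: "tetrahedron_of_flags v eta" and I: "inscribed_tetrahedron_of_flags v eta"
    and \<sigma>: "edge_face \<sigma>"
  shows "(0 < j_inv v eta \<sigma> \<longrightarrow> inscribed_hyperbolic v eta) \<and>
    (j_inv v eta \<sigma> < 0 \<longrightarrow> inscribed_ads v eta) \<and>
    (j_inv v eta \<sigma> = 0 \<longrightarrow> inscribed_halfpipe v eta)"
proof -
  obtain M where M: "inscribed_in v eta M" and type: "hyperbolic_form M \<or> ads_form M \<or> halfpipe_form M"
    using I unfolding inscribed_tetrahedron_of_flags_def inscribed_hyperbolic_def inscribed_ads_def
      inscribed_halfpipe_def by blast
  then have "transpose M = M"
    unfolding hyperbolic_form_def ads_form_def halfpipe_form_def by blast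
  note j = inscribed_j_inv_sgn[OF T M this \<sigma>]
  from type show ?thesis
    using M j form_det_sgn[of M]
    unfolding inscribed_hyperbolic_def inscribed_ads_def inscribed_halfpipe_def
    by (auto simp: sgn_if split: if_splits)
qed

theorem theorem5p3:
  fixes v eta :: "nat \<Rightarrow> real^4"
  assumes "tetrahedron_of_flags v eta"
  shows "(inscribed_tetrahedron_of_flags v eta \<longleftrightarrow>
            (\<forall>\<sigma>. edge_face \<sigma> \<longrightarrow> triple_ratio v eta \<sigma> = 1))
       \<and> ((\<forall>\<sigma>. edge_face \<sigma> \<longrightarrow> triple_ratio v eta \<sigma> = 1) \<longleftrightarrow>
            (\<forall>\<sigma>. edge_face \<sigma> \<longrightarrow> edge_ratio v eta \<sigma> = edge_ratio v eta (ef_op \<sigma>)))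
       \<and> (inscribed_tetrahedron_of_flags v eta \<longrightarrow>
            (\<forall>\<sigma>. edge_face \<sigma> \<longrightarrow>
               (j_inv v eta \<sigma> > 0 \<longrightarrow> inscribed_hyperbolic v eta) \<and>
               (j_inv v eta \<sigma> < 0 \<longrightarrow> inscribed_ads v eta) \<and>
               (j_inv v eta \<sigma> = 0 \<longrightarrow> inscribed_halfpipe v eta)))"
  (is "(?I \<longleftrightarrow> ?t) \<and> (?t \<longleftrightarrow> ?e) \<and> ?j")
proof -
  note T = assms
  let ?base = "triple_ratio v eta (1, 2, 3, 4) = 1 \<and> triple_ratio v eta (1, 3, 4, 2) = 1 \<and>
    triple_ratio v eta (1, 4, 2, 3) = 1"
  have t_base: "?t \<Longrightarrow> ?base" and e_base: "?e \<Longrightarrow> ?base"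
    using edge_face_1234 edge_face_1342 edge_face_1423 base_edge_ratios_imp_triple_ratios[OF T] by blast+
  have base_I: "?base \<Longrightarrow> ?I" and base_te: "?base \<Longrightarrow> ?t \<and> ?e"
    using base_triple_ratios_imp_symmetric_rescaling[OF T] symmetric_rescaling_inscribed[OF T]
      symmetric_rescaling_edge_face[OF T] by metis+
  have I_t: "?I \<Longrightarrow> ?t"
    unfolding inscribed_tetrahedron_of_flags_def inscribed_hyperbolic_def inscribed_ads_def
      inscribed_halfpipe_def hyperbolic_form_def ads_form_def halfpipe_form_def
    using inscribed_in_symmetric_rescaling symmetric_rescaling_edge_face(1)[OF T] by metis
  show ?thesis
    using t_base e_base base_I base_te I_t inscribed_type_by_j_inv[OF T] by blast
qed

end
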